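(* Let $G$ be a connected Cartesian-prime graph with at least two vertices, and put $n=|V(G)|$, $m=|E(G)|$. Let $$r=\max\{\,|\beta|_e\cdot n+|\beta|\cdot m \;:\; \beta\in\mathrm{Aut}(G)\setminus\{\mathrm{id}\}\,\},$$ with $r=0$ if $\mathrm{Aut}(G)$ is trivial. Then $$\theta'(G\,\square\, G)=\max\{\,n\cdot m,\ r\,\}+1.$$
   Context: All graphs are finite and simple. $\square$ denotes the Cartesian product. A graph is (Cartesian) prime if it is not isomorphic to a Cartesian product of two graphs each with at least two vertices. For an automorphism $\beta$ (acting on edges by $\beta(uv)=\beta(u)\beta(v)$), $|\beta|$ is the number of cycles (including fixed points) of $\beta$ on $V(G)$, and $|\beta|_e$ is the number of cycles of $\beta$ on $E(G)$. An edge coloring with $k$ colors is a surjective map onto $\{1,\dots,k\}$. It is distinguishing if only the identity automorphism preserves all edge colors. $\theta'(H)$ is the least $k$ such that every edge coloring of $H$ using exactly $k$ colors is distinguishing. *)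

theory Defs
  imports Main
begin

text \<open>A finite simple graph: a pair (vertex set, edge set), edges are 2-element subsets.\<close>
type_synonym 'a graph = "'a set \<times> 'a set set"

definition verts :: "'a graph \<Rightarrow> 'a set" where "verts G = fst G"
definition edges :: "'a graph \<Rightarrow> 'a set set" where "edges G = snd G"

definition simple_graph :: "'a graph \<Rightarrow> bool" where
  "simple_graph G \<longleftrightarrow> finite (verts G) \<and>
     (\<forall>e\<in>edges G. \<exists>u v. e = {u, v} \<and> u \<noteq> v \<and> u \<in> verts G \<and> v \<in> verts G)"

definition adj :: "'a graph \<Rightarrow> 'a \<Rightarrow> 'a \<Rightarrow> bool" where
  "adj G u v \<longleftrightarrow> {u, v} \<in> edges G"

definition connected_graph :: "'a graph \<Rightarrow> bool" where
  "connected_graph G \<longleftrightarrow> (\<forall>u\<in>verts G. \<forall>v\<in>verts G. (adj G)\<^sup>*\<^sup>* u v)"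

definition cart_prod :: "'a graph \<Rightarrow> 'b graph \<Rightarrow> ('a \<times> 'b) graph" where
  "cart_prod G H = (verts G \<times> verts H,
     {{(u, x), (v, y)} | u x v y.
        (u = v \<and> u \<in> verts G \<and> {x, y} \<in> edges H) \<or>
        (x = y \<and> x \<in> verts H \<and> {u, v} \<in> edges G)})"

definition graph_iso :: "'a graph \<Rightarrow> 'b graph \<Rightarrow> bool" where
  "graph_iso G H \<longleftrightarrow> (\<exists>f. bij_betw f (verts G) (verts H) \<and>
     (\<forall>u\<in>verts G. \<forall>v\<in>verts G. {u, v} \<in> edges G \<longleftrightarrow> {f u, f v} \<in> edges H))"

text \<open>Cartesian prime. Factors are finite graphs, so w.l.o.g. their vertices are
  natural numbers (any finite graph is isomorphic to one on nat).\<close>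
definition cart_prime :: "'a graph \<Rightarrow> bool" where
  "cart_prime (G :: 'a graph) \<longleftrightarrow> \<not> (\<exists>(H1 :: nat graph) (H2 :: nat graph). simple_graph H1 \<and> simple_graph H2 \<and>
      card (verts H1) \<ge> 2 \<and> card (verts H2) \<ge> 2 \<and> graph_iso G (cart_prod H1 H2))"

text \<open>Automorphisms, represented extensionally (identity outside the vertex set).\<close>
definition auts :: "'a graph \<Rightarrow> ('a \<Rightarrow> 'a) set" where
  "auts G = {f. bij_betw f (verts G) (verts G) \<and>
     (\<forall>u\<in>verts G. \<forall>v\<in>verts G. {u, v} \<in> edges G \<longleftrightarrow> {f u, f v} \<in> edges G) \<and>
     (\<forall>x. x \<notin> verts G \<longrightarrow> f x = x)}"

text \<open>|beta|: number of cycles of beta on V(G); |beta|_e: number of cycles on E(G).\<close>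
definition vertex_cycles :: "'a graph \<Rightarrow> ('a \<Rightarrow> 'a) \<Rightarrow> nat" where
  "vertex_cycles G f = card ((\<lambda>x. {(f ^^ k) x | k. True}) ` verts G)"

definition edge_cycles :: "'a graph \<Rightarrow> ('a \<Rightarrow> 'a) \<Rightarrow> nat" where
  "edge_cycles G f = card ((\<lambda>e. {(f ^^ k) ` e | k. True}) ` edges G)"

definition distinguishing :: "'a graph \<Rightarrow> ('a set \<Rightarrow> nat) \<Rightarrow> bool" where
  "distinguishing G c \<longleftrightarrow>
     (\<forall>f\<in>auts G. (\<forall>e\<in>edges G. c (f ` e) = c e) \<longrightarrow> f = id)"

definition theta' :: "'a graph \<Rightarrow> nat" where
  "theta' G = (LEAST k. k \<ge> 1 \<and>
     (\<forall>c. c ` edges G = {1..k} \<longrightarrow> distinguishing G c))"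

end

theory Submission
  imports Defs
begin

text \<open>
  A colouring preserved by an automorphism f is constant on the orbits of f on the edges, and any
  colouring constant on them is preserved; so theta'(K) - 1 is the largest number of edge cycles of a
  non-trivial automorphism of K.

  For K = G \<box> G with G connected and prime, an automorphism maps layers onto layers: the image of a
  layer is geodesically convex, hence a box X \<times> Y, and primeness forces X or Y to be a single
  vertex. So an automorphism either is a product \<alpha> \<times> \<beta> of automorphisms of G, or it maps every
  layer of the second kind onto one of the first kind. In the first case counting edge orbits layer
  by layer bounds their number by |\<alpha>|_e n + |\<alpha>| m and by |\<beta>|_e n + |\<beta>| m; in the second case
  every edge orbit meets the n m edges of layers of the first kind. The bounds are attained by
  \<beta> \<times> id and by the transposition (a, b) \<mapsto> (b, a).
\<close>

definition forward_orbit :: "('b \<Rightarrow> 'b) \<Rightarrow> 'b \<Rightarrow> 'b set" where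
  "forward_orbit h x = {(h ^^ k) x | k. True}"

lemma funpow_in_forward_orbit: "(h ^^ k) x \<in> forward_orbit h x"
  unfolding forward_orbit_def by auto

lemma forward_orbit_self: "x \<in> forward_orbit h x"
  using funpow_in_forward_orbit[where k=0] by simp

lemma apply_in_forward_orbit: "h x \<in> forward_orbit h x"
  using funpow_in_forward_orbit[where k=1] by simp

lemma forward_orbit_trans:
  assumes "y \<in> forward_orbit h x"
  shows "forward_orbit h y \<subseteq> forward_orbit h x"
proof
  fix z assume "z \<in> forward_orbit h y"
  then obtain a b where "y = (h ^^ a) x" "z = (h ^^ b) y"
    using assms unfolding forward_orbit_def by auto
  then have "z = (h ^^ (b + a)) x" by (simp add: funpow_add)
  then show "z \<in> forward_orbit h x" using funpow_in_forward_orbit by metis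
qed

lemma forward_orbit_subset:
  assumes "h ` Z \<subseteq> Z" "x \<in> Z"
  shows "forward_orbit h x \<subseteq> Z"
proof -
  have "(h ^^ k) x \<in> Z" for k by (induction k) (use assms in auto)
  then show ?thesis unfolding forward_orbit_def by auto
qed

lemma forward_orbit_invariant:
  assumes "\<forall>z\<in>Z. c (h z) = c z" "h ` Z \<subseteq> Z" "x \<in> Z" "y \<in> forward_orbit h x"
  shows "c y = c x"
proof -
  have "c ((h ^^ k) x) = c x" for k
  proof (induction k)
    case (Suc k)
    have "(h ^^ k) x \<in> Z"
      by (rule subsetD[OF forward_orbit_subset[OF assms(2,3)] funpow_in_forward_orbit])
    then show ?case using assms(1) Suc by simp
  qed simp
  then show ?thesis using assms(4) unfolding forward_orbit_def by auto
qed

text \<open>Pigeonhole: two of the points (h ^^ k) x, k \<le> card Z, coincide, and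
  injectivity of h on Z cancels the common prefix.\<close>
lemma bij_betw_funpow_return:
  assumes "bij_betw h Z Z" "finite Z" "x \<in> Z"
  shows "\<exists>p>0. (h ^^ p) x = x"
proof -
  have hk: "bij_betw (h ^^ k) Z Z" for k using bij_betw_funpow[OF assms(1)] .
  have "\<not> inj_on (\<lambda>k. (h ^^ k) x) {0..card Z}"
  proof
    assume "inj_on (\<lambda>k. (h ^^ k) x) {0..card Z}"
    then have "card ((\<lambda>k. (h ^^ k) x) ` {0..card Z}) = Suc (card Z)"
      by (simp add: card_image)
    moreover have "(\<lambda>k. (h ^^ k) x) ` {0..card Z} \<subseteq> Z"
      using hk assms(3) by (auto simp: bij_betw_def)
    ultimately show False using card_mono[OF assms(2)] by (metis Suc_n_not_le_n)
  qed
  then obtain i j where "i \<noteq> j" "(h ^^ i) x = (h ^^ j) x"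
    unfolding inj_on_def by blast
  then obtain i j where ij: "i < j" "(h ^^ i) x = (h ^^ j) x"
    by (metis linorder_neqE_nat)
  have "(h ^^ i) ((h ^^ (j - i)) x) = (h ^^ (i + (j - i))) x" by (simp add: funpow_add)
  also have "\<dots> = (h ^^ i) x" using ij by simp
  finally have "(h ^^ i) ((h ^^ (j - i)) x) = (h ^^ i) x" .
  moreover have "(h ^^ (j - i)) x \<in> Z" using hk assms(3) by (auto simp: bij_betw_def)
  ultimately have "(h ^^ (j - i)) x = x"
    using inj_onD[OF bij_betw_imp_inj_on[OF hk[of i]]] assms(3) by blast
  then show ?thesis using ij(1) by (intro exI[of _ "j - i"]) auto
qed

lemma forward_orbit_sym:
  assumes "bij_betw h Z Z" "finite Z" "x \<in> Z" "y \<in> forward_orbit h x"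
  shows "x \<in> forward_orbit h y"
proof -
  obtain p where p: "p > 0" "(h ^^ p) x = x" using bij_betw_funpow_return[OF assms(1-3)] by blast
  obtain m where m: "y = (h ^^ m) x" using assms(4) unfolding forward_orbit_def by auto
  have pk: "(h ^^ (p * k)) x = x" for k
    by (induction k) (simp_all add: p(2) funpow_add)
  have "(h ^^ (p * m - m)) y = (h ^^ (p * m - m + m)) x" using m by (simp add: funpow_add)
  also have "\<dots> = x" using p(1) pk[of m] by simp
  finally show ?thesis using funpow_in_forward_orbit[of "p * m - m" h y] by simp
qed

lemma forward_orbit_eq:
  assumes "bij_betw h Z Z" "finite Z" "x \<in> Z" "y \<in> forward_orbit h x"
  shows "forward_orbit h y = forward_orbit h x"
  using forward_orbit_trans[OF assms(4)] forward_orbit_trans[OF forward_orbit_sym[OF assms]]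
  by (rule antisym)

lemma funpow_map_pair:
  assumes "\<And>x y. x \<in> X \<Longrightarrow> y \<in> Y \<Longrightarrow> h (j x y) = j (f x) (g y)"
    and "f ` X \<subseteq> X" "g ` Y \<subseteq> Y" "x \<in> X" "y \<in> Y"
  shows "(h ^^ k) (j x y) = j ((f ^^ k) x) ((g ^^ k) y) \<and> (f ^^ k) x \<in> X \<and> (g ^^ k) y \<in> Y"
proof (induction k)
  case (Suc k)
  then have "(f ^^ k) x \<in> X" "(g ^^ k) y \<in> Y" by simp_all
  then show ?case using Suc assms(1-3) by auto
qed (use assms(4,5) in simp)

text \<open>If h acts on the points j x y as f \<times> g, every h-orbit
  through them is already determined by an f-orbit and a point of Y.\<close>
lemma card_forward_orbits_pair_le:
  assumes hj: "\<And>x y. x \<in> X \<Longrightarrow> y \<in> Y \<Longrightarrow> h (j x y) = j (f x) (g y)"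
    and fX: "f ` X \<subseteq> X" and gY: "g ` Y \<subseteq> Y" and "finite X" "finite Y"
    and orbit_eq: "\<And>x y w. x \<in> X \<Longrightarrow> y \<in> Y \<Longrightarrow> w \<in> forward_orbit h (j x y) \<Longrightarrow>
        forward_orbit h w = forward_orbit h (j x y)"
  shows "card ((\<lambda>(x, y). forward_orbit h (j x y)) ` (X \<times> Y))
           \<le> card (forward_orbit f ` X) * card Y"
proof -
  define F where "F = (\<lambda>(Q, y). forward_orbit h (j (SOME x. x \<in> Q) y))"
  have "(\<lambda>(x, y). forward_orbit h (j x y)) ` (X \<times> Y) \<subseteq> F ` (forward_orbit f ` X \<times> Y)"
  proof clarify
    fix x y assume xy: "x \<in> X" "y \<in> Y"
    define x' where "x' = (SOME x'. x' \<in> forward_orbit f x)"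
    have "x' \<in> forward_orbit f x" unfolding x'_def by (rule someI, rule forward_orbit_self)
    then obtain k where k: "x' = (f ^^ k) x" unfolding forward_orbit_def by auto
    have fp: "(h ^^ k) (j x y) = j x' ((g ^^ k) y)" "(g ^^ k) y \<in> Y"
      using funpow_map_pair[where h=h and j=j and f=f and g=g, OF hj fX gY xy, of k] k by auto
    have "F (forward_orbit f x, (g ^^ k) y) = forward_orbit h (j x' ((g ^^ k) y))"
      unfolding F_def x'_def by simp
    also have "\<dots> = forward_orbit h ((h ^^ k) (j x y))" using fp(1) by simp
    also have "\<dots> = forward_orbit h (j x y)" using orbit_eq[OF xy funpow_in_forward_orbit] .
    finally show "forward_orbit h (j x y) \<in> F ` (forward_orbit f ` X \<times> Y)"
      using xy fp(2) by (metis SigmaI imageI)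
  qed
  then have "card ((\<lambda>(x, y). forward_orbit h (j x y)) ` (X \<times> Y))
      \<le> card (F ` (forward_orbit f ` X \<times> Y))"
    using assms(4,5) by (intro card_mono) auto
  also have "\<dots> \<le> card (forward_orbit f ` X \<times> Y)" using assms(4,5) by (intro card_image_le) auto
  also have "\<dots> = card (forward_orbit f ` X) * card Y" by (rule card_cartesian_product)
  finally show ?thesis .
qed

lemma card_forward_orbits_pair_eq:
  assumes hj: "\<And>x y. x \<in> X \<Longrightarrow> y \<in> Y \<Longrightarrow> h (j x y) = j (f x) y"
    and fX: "f ` X \<subseteq> X" and inj: "inj_on (\<lambda>(x, y). j x y) (X \<times> Y)"
  shows "card ((\<lambda>(x, y). forward_orbit h (j x y)) ` (X \<times> Y))
           = card (forward_orbit f ` X) * card Y"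
proof -
  define \<Phi> where "\<Phi> = (\<lambda>(Q, y). (\<lambda>x. j x y) ` Q)"
  have orbit_j: "forward_orbit h (j x y) = \<Phi> (forward_orbit f x, y)" if "x \<in> X" "y \<in> Y" for x y
  proof -
    have "(h ^^ k) (j x y) = j ((f ^^ k) x) ((id ^^ k) y)" for k
      by (rule funpow_map_pair[THEN conjunct1]) (use hj fX that in auto)
    then show ?thesis unfolding forward_orbit_def \<Phi>_def by auto
  qed
  have "(\<lambda>(x, y). forward_orbit h (j x y)) ` (X \<times> Y)
      = (\<Phi> \<circ> map_prod (forward_orbit f) (\<lambda>y. y)) ` (X \<times> Y)"
    by (intro image_cong) (auto simp: orbit_j)
  also have "\<dots> = \<Phi> ` (forward_orbit f ` X \<times> Y)"
    by (simp only: image_comp[symmetric] map_prod_surj_on[OF refl image_ident])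
  finally have orbits: "(\<lambda>(x, y). forward_orbit h (j x y)) ` (X \<times> Y) = \<Phi> ` (forward_orbit f ` X \<times> Y)" .
  have "inj_on \<Phi> (forward_orbit f ` X \<times> Y)"
  proof (rule inj_onI, clarify)
    fix x y x' y' assume x: "x \<in> X" "x' \<in> X" and y: "y \<in> Y" "y' \<in> Y"
      and eq: "\<Phi> (forward_orbit f x, y) = \<Phi> (forward_orbit f x', y')"
    have sub: "forward_orbit f x \<subseteq> X" "forward_orbit f x' \<subseteq> X"
      using forward_orbit_subset[OF fX] x by auto
    have "j x y \<in> \<Phi> (forward_orbit f x, y)"
      unfolding \<Phi>_def by (simp add: forward_orbit_self)
    then have "j x y \<in> \<Phi> (forward_orbit f x', y')" by (simp only: eq)
    then obtain x'' where "x'' \<in> forward_orbit f x'" "j x y = j x'' y'"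
      unfolding \<Phi>_def by auto
    then have yy: "y = y'" using inj_onD[OF inj, of "(x, y)" "(x'', y')"] x y sub by auto
    have "inj_on (\<lambda>x. j x y) X" using inj y(1) by (auto simp: inj_on_def)
    moreover have "(\<lambda>x. j x y) ` forward_orbit f x = (\<lambda>x. j x y) ` forward_orbit f x'"
      using eq yy unfolding \<Phi>_def by simp
    ultimately have "forward_orbit f x = forward_orbit f x'"
      using inj_on_image_eq_iff[OF _ sub] by blast
    then show "forward_orbit f x = forward_orbit f x' \<and> y = y'" using yy by simp
  qed
  then show ?thesis unfolding orbits by (simp add: card_image card_cartesian_product)
qed

lemma card_forward_orbits_Un_disjoint:
  assumes "h ` A \<subseteq> A" "h ` B \<subseteq> B" "A \<inter> B = {}" "finite A" "finite B"
  shows "card (forward_orbit h ` (A \<union> B)) = card (forward_orbit h ` A) + card (forward_orbit h ` B)"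
proof -
  have "forward_orbit h x \<noteq> forward_orbit h y" if "x \<in> A" "y \<in> B" for x y
  proof
    assume "forward_orbit h x = forward_orbit h y"
    then have "y \<in> A" using forward_orbit_self[of y h] forward_orbit_subset[OF assms(1) that(1)] by auto
    then show False using that(2) assms(3) by blast
  qed
  then have "forward_orbit h ` A \<inter> forward_orbit h ` B = {}" by blast
  then show ?thesis using assms(4,5) by (simp add: image_Un card_Un_disjoint)
qed

lemma simple_graph_finite_verts: "simple_graph G \<Longrightarrow> finite (verts G)"
  unfolding simple_graph_def by auto

lemma simple_graph_edge:
  "simple_graph G \<Longrightarrow> e \<in> edges G \<Longrightarrow> \<exists>u v. e = {u, v} \<and> u \<noteq> v \<and> u \<in> verts G \<and> v \<in> verts G"
  unfolding simple_graph_def by auto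

lemma simple_graph_edge_subset: "simple_graph G \<Longrightarrow> e \<in> edges G \<Longrightarrow> e \<subseteq> verts G"
  using simple_graph_edge by fastforce

lemma simple_graph_finite_edges: "simple_graph G \<Longrightarrow> finite (edges G)"
  using simple_graph_edge_subset simple_graph_finite_verts
  by (metis Pow_iff finite_Pow_iff finite_subset subsetI)

lemma simple_graph_edge_verts:
  "simple_graph G \<Longrightarrow> {u, v} \<in> edges G \<Longrightarrow> u \<in> verts G \<and> v \<in> verts G \<and> u \<noteq> v"
  using simple_graph_edge[of G "{u, v}"] by (auto simp: doubleton_eq_iff)

lemma verts_cart_prod [simp]: "verts (cart_prod G1 G2) = verts G1 \<times> verts G2"
  unfolding cart_prod_def verts_def by simp

lemma cart_prod_edge_iff:
  "{(u, x), (v, y)} \<in> edges (cart_prod G1 G2) \<longleftrightarrow>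
     (u = v \<and> u \<in> verts G1 \<and> {x, y} \<in> edges G2) \<or> (x = y \<and> x \<in> verts G2 \<and> {u, v} \<in> edges G1)"
proof
  assume "{(u, x), (v, y)} \<in> edges (cart_prod G1 G2)"
  then obtain u' x' v' y' where e: "{(u, x), (v, y)} = {(u', x'), (v', y')}"
    and "(u' = v' \<and> u' \<in> verts G1 \<and> {x', y'} \<in> edges G2) \<or>
         (x' = y' \<and> x' \<in> verts G2 \<and> {u', v'} \<in> edges G1)"
    unfolding cart_prod_def edges_def by auto
  moreover from e have "(u, x) = (u', x') \<and> (v, y) = (v', y') \<or> (u, x) = (v', y') \<and> (v, y) = (u', x')"
    by (simp add: doubleton_eq_iff)
  ultimately show "(u = v \<and> u \<in> verts G1 \<and> {x, y} \<in> edges G2) \<or>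
      (x = y \<and> x \<in> verts G2 \<and> {u, v} \<in> edges G1)"
    by (auto simp: insert_commute)
qed (auto simp: cart_prod_def edges_def)

lemma cart_prod_edgeE:
  assumes "e \<in> edges (cart_prod G1 G2)"
  obtains u x v y where "e = {(u, x), (v, y)}"
  using assms unfolding cart_prod_def edges_def by auto

lemma simple_graph_cart_prod:
  assumes "simple_graph G1" "simple_graph G2"
  shows "simple_graph (cart_prod G1 G2)"
  unfolding simple_graph_def
proof (intro conjI ballI)
  show "finite (verts (cart_prod G1 G2))" using assms by (simp add: simple_graph_finite_verts)
  fix e assume e: "e \<in> edges (cart_prod G1 G2)"
  then obtain u x v y where uxvy: "e = {(u, x), (v, y)}" by (rule cart_prod_edgeE)
  then have "(u = v \<and> u \<in> verts G1 \<and> {x, y} \<in> edges G2) \<or> (x = y \<and> x \<in> verts G2 \<and> {u, v} \<in> edges G1)"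
    using e cart_prod_edge_iff by metis
  then have "(u, x) \<noteq> (v, y) \<and> (u, x) \<in> verts (cart_prod G1 G2) \<and> (v, y) \<in> verts (cart_prod G1 G2)"
    using simple_graph_edge_verts[OF assms(1), of u v] simple_graph_edge_verts[OF assms(2), of x y]
    by auto
  then show "\<exists>p q. e = {p, q} \<and> p \<noteq> q \<and> p \<in> verts (cart_prod G1 G2) \<and> q \<in> verts (cart_prod G1 G2)"
    using uxvy by blast
qed

lemma auts_bij_betw: "f \<in> auts G \<Longrightarrow> bij_betw f (verts G) (verts G)"
  unfolding auts_def by simp

lemma auts_edge_iff:
  "f \<in> auts G \<Longrightarrow> u \<in> verts G \<Longrightarrow> v \<in> verts G \<Longrightarrow> {f u, f v} \<in> edges G \<longleftrightarrow> {u, v} \<in> edges G"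
  unfolding auts_def by simp

lemma auts_fixes: "f \<in> auts G \<Longrightarrow> x \<notin> verts G \<Longrightarrow> f x = x"
  unfolding auts_def by simp

lemma auts_inj_on: "f \<in> auts G \<Longrightarrow> inj_on f (verts G)"
  using auts_bij_betw bij_betw_def by metis

lemma auts_image_verts: "f \<in> auts G \<Longrightarrow> f ` verts G = verts G"
  using auts_bij_betw bij_betw_def by metis

lemma auts_in_verts: "f \<in> auts G \<Longrightarrow> u \<in> verts G \<Longrightarrow> f u \<in> verts G"
  using auts_image_verts by blast

lemma id_in_auts: "id \<in> auts G"
  unfolding auts_def by auto

lemma auts_comp:
  assumes "f \<in> auts G" "g \<in> auts G"
  shows "f \<circ> g \<in> auts G"
proof -
  have "bij_betw (f \<circ> g) (verts G) (verts G)"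
    using auts_bij_betw[OF assms(1)] auts_bij_betw[OF assms(2)] by (rule bij_betw_trans[rotated])
  moreover have "{(f \<circ> g) u, (f \<circ> g) v} \<in> edges G \<longleftrightarrow> {u, v} \<in> edges G"
    if "u \<in> verts G" "v \<in> verts G" for u v
    using that auts_edge_iff[OF assms(1)] auts_edge_iff[OF assms(2)] auts_in_verts[OF assms(2)] by simp
  ultimately show ?thesis using auts_fixes[OF assms(1)] auts_fixes[OF assms(2)] unfolding auts_def by auto
qed

lemma auts_eq_id:
  assumes "f \<in> auts G" "\<forall>x\<in>verts G. f x = x"
  shows "f = id"
proof
  fix x show "f x = id x" using assms auts_fixes[OF assms(1), of x] by (cases "x \<in> verts G") simp_all
qed

lemma auts_extend_idI:
  assumes "finite (verts G)" "f ` verts G \<subseteq> verts G" "inj_on f (verts G)"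
    and "\<And>u v. u \<in> verts G \<Longrightarrow> v \<in> verts G \<Longrightarrow> {f u, f v} \<in> edges G \<longleftrightarrow> {u, v} \<in> edges G"
  shows "(\<lambda>x. if x \<in> verts G then f x else x) \<in> auts G"
proof -
  have "bij_betw f (verts G) (verts G)"
    using endo_inj_surj[OF assms(1-3)] assms(3) by (simp add: bij_betw_def)
  then have "bij_betw (\<lambda>x. if x \<in> verts G then f x else x) (verts G) (verts G)"
    by (rule bij_betw_cong[THEN iffD1, rotated]) simp
  then show ?thesis using assms(4) unfolding auts_def by simp
qed

lemma auts_image_edge: "simple_graph G \<Longrightarrow> f \<in> auts G \<Longrightarrow> e \<in> edges G \<Longrightarrow> f ` e \<in> edges G"
  using simple_graph_edge[of G e] auts_edge_iff[of f G] by force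

lemma auts_bij_betw_edges:
  assumes G: "simple_graph G" and f: "f \<in> auts G"
  shows "bij_betw (image f) (edges G) (edges G)"
proof -
  have "inj_on (image f) (edges G)"
    using auts_inj_on[OF f] simple_graph_edge_subset[OF G] by (auto simp: inj_on_def inj_on_image_eq_iff)
  moreover have "edges G \<subseteq> image f ` edges G"
  proof
    fix e assume e: "e \<in> edges G"
    then obtain u v where uv: "e = {u, v}" "u \<in> verts G" "v \<in> verts G"
      using simple_graph_edge[OF G] by blast
    then obtain u' v' where "u' \<in> verts G" "v' \<in> verts G" "u = f u'" "v = f v'"
      using auts_image_verts[OF f] by (metis imageE)
    then show "e \<in> image f ` edges G"
      using uv e auts_edge_iff[OF f, of u' v'] by (auto intro!: image_eqI[of _ _ "{u', v'}"])
  qed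
  ultimately show ?thesis
    using auts_image_edge[OF G f] unfolding bij_betw_def by blast
qed

lemma edge_cycles_eq_card_orbits: "edge_cycles G f = card (forward_orbit (image f) ` edges G)"
proof -
  have "((`) f ^^ k) e = (f ^^ k) ` e" for k and e :: "'a set"
    by (induction k) (simp_all add: image_comp)
  then show ?thesis unfolding edge_cycles_def forward_orbit_def by simp
qed

lemma vertex_cycles_eq_card_orbits: "vertex_cycles G f = card (forward_orbit f ` verts G)"
  unfolding vertex_cycles_def forward_orbit_def by simp

lemma cycles_le_card:
  assumes "simple_graph G"
  shows "edge_cycles G f \<le> card (edges G)" "vertex_cycles G f \<le> card (verts G)"
  unfolding edge_cycles_eq_card_orbits vertex_cycles_eq_card_orbits
  using assms by (simp_all add: card_image_le simple_graph_finite_edges simple_graph_finite_verts)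

definition walk_dist :: "'b graph \<Rightarrow> 'b \<Rightarrow> 'b \<Rightarrow> nat" where
  "walk_dist K u v = (LEAST k. (adj K ^^ k) u v)"

lemma walk_dist_le: "(adj K ^^ k) u v \<Longrightarrow> walk_dist K u v \<le> k"
  unfolding walk_dist_def by (rule Least_le)

lemma walk_dist_walk: "(adj K ^^ k) u v \<Longrightarrow> (adj K ^^ walk_dist K u v) u v"
  unfolding walk_dist_def by (rule LeastI)

lemma walk_dist_self [simp]: "walk_dist K u u = 0"
  using walk_dist_le[of 0 K u u] by simp

lemma walk_dist_eq_0: "(adj K ^^ k) u v \<Longrightarrow> walk_dist K u v = 0 \<Longrightarrow> u = v"
  using walk_dist_walk[of k K u v] by simp

lemma walk_dist_triangle:
  assumes "(adj K ^^ k1) u v" "(adj K ^^ k2) v w"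
  shows "walk_dist K u w \<le> walk_dist K u v + walk_dist K v w"
  using walk_dist_walk[OF assms(1)] walk_dist_walk[OF assms(2)]
  by (intro walk_dist_le) (auto simp: relpowp_add)

lemma auts_walk:
  assumes K: "simple_graph K" and f: "f \<in> auts K" and u: "u \<in> verts K"
  shows "(adj K ^^ k) u w \<Longrightarrow> (adj K ^^ k) (f u) (f w)"
proof (induction k arbitrary: w)
  case (Suc k)
  from Suc.prems obtain y where y: "(adj K ^^ k) u y" "adj K y w" by (rule relpowp_Suc_E)
  then have "adj K (f y) (f w)"
    using simple_graph_edge_verts[OF K] auts_edge_iff[OF f] unfolding adj_def by metis
  with Suc.IH[OF y(1)] show ?case by (rule relpowp_Suc_I)
qed simp

lemma auts_walk_rev:
  assumes K: "simple_graph K" and f: "f \<in> auts K" and u: "u \<in> verts K"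
  shows "(adj K ^^ k) (f u) (f w) \<Longrightarrow> w \<in> verts K \<Longrightarrow> (adj K ^^ k) u w"
proof (induction k arbitrary: w)
  case 0
  then show ?case using inj_onD[OF auts_inj_on[OF f]] u by simp
next
  case (Suc k)
  from Suc.prems(1) obtain y where y: "(adj K ^^ k) (f u) y" "adj K y (f w)" by (rule relpowp_Suc_E)
  then have "y \<in> verts K" using simple_graph_edge_verts[OF K] unfolding adj_def by blast
  then obtain y' where y': "y' \<in> verts K" "y = f y'" using auts_image_verts[OF f] by blast
  then have "adj K y' w" using y(2) auts_edge_iff[OF f y'(1) Suc.prems(2)] unfolding adj_def by simp
  then show ?case using Suc.IH[OF _ y'(1)] y(1) y'(2) by (metis relpowp_Suc_I)
qed

lemma auts_walk_dist:
  assumes "simple_graph K" "f \<in> auts K" "u \<in> verts K" "w \<in> verts K"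
  shows "walk_dist K (f u) (f w) = walk_dist K u w"
  using auts_walk[OF assms(1-3)] auts_walk_rev[OF assms(1-3) _ assms(4)]
  unfolding walk_dist_def by metis

lemma card_colours_le_edge_cycles:
  assumes K: "simple_graph K" and f: "f \<in> auts K" and pres: "\<forall>e\<in>edges K. c (f ` e) = c e"
  shows "card (c ` edges K) \<le> edge_cycles K f"
proof -
  define g where "g Q = c (SOME e. e \<in> Q)" for Q :: "'a set set"
  have "g (forward_orbit (image f) e) = c e" if "e \<in> edges K" for e
  proof -
    have "(SOME e'. e' \<in> forward_orbit (image f) e) \<in> forward_orbit (image f) e"
      by (rule someI, rule forward_orbit_self)
    moreover have "image f ` edges K \<subseteq> edges K" using auts_image_edge[OF K f] by auto
    ultimately show ?thesis unfolding g_def using forward_orbit_invariant[OF pres _ that] by blast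
  qed
  then have "c ` edges K = g ` forward_orbit (image f) ` edges K"
    by (simp add: image_comp cong: image_cong)
  then show ?thesis
    unfolding edge_cycles_eq_card_orbits
    using card_image_le finite_imageI simple_graph_finite_edges[OF K] by metis
qed

text \<open>Colour each edge by the rank of its orbit, truncated at k.\<close>
lemma exists_colouring_preserved:
  assumes "simple_graph K" "f \<in> auts K" "1 \<le> k" "k \<le> edge_cycles K f"
  shows "\<exists>c. c ` edges K = {1..k} \<and> (\<forall>e\<in>edges K. c (f ` e) = c e)"
proof -
  define orbits where "orbits = forward_orbit (image f) ` edges K"
  have "finite orbits" unfolding orbits_def using simple_graph_finite_edges[OF assms(1)] by simp
  then obtain r where r: "bij_betw r orbits {0..<card orbits}" using ex_bij_betw_finite_nat by blast
  define c where "c = (\<lambda>e. min (r (forward_orbit (image f) e) + 1) k)"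
  have "c ` edges K = (\<lambda>i. min (i + 1) k) ` r ` orbits"
    unfolding c_def orbits_def by (simp add: image_comp)
  also have "\<dots> = {1..k}"
  proof -
    have "t \<in> (\<lambda>i. min (i + 1) k) ` {0..<card orbits}" if "t \<in> {1..k}" for t
      using that assms(4) unfolding edge_cycles_eq_card_orbits orbits_def
      by (intro image_eqI[of _ _ "t - 1"]) auto
    then show ?thesis using r assms(3) by (auto simp: bij_betw_def)
  qed
  finally have "c ` edges K = {1..k}" .
  moreover have "c (f ` e) = c e" if "e \<in> edges K" for e
    using forward_orbit_eq[OF auts_bij_betw_edges[OF assms(1,2)] simple_graph_finite_edges[OF assms(1)]
        that apply_in_forward_orbit]
    unfolding c_def by simp
  ultimately show ?thesis by blast
qed

lemma theta'_eq_Suc_max_edge_cycles: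
  assumes "simple_graph K" "1 \<le> M"
    and "\<And>f. f \<in> auts K \<Longrightarrow> f \<noteq> id \<Longrightarrow> edge_cycles K f \<le> M"
    and "\<exists>f\<in>auts K. f \<noteq> id \<and> M \<le> edge_cycles K f"
  shows "theta' K = M + 1"
  unfolding theta'_def
proof (rule Least_equality)
  show "1 \<le> M + 1 \<and> (\<forall>c. c ` edges K = {1..M + 1} \<longrightarrow> distinguishing K c)"
  proof (intro conjI allI impI)
    fix c assume c: "c ` edges K = {1..M + 1}"
    show "distinguishing K c" unfolding distinguishing_def
    proof (intro ballI impI)
      fix f assume f: "f \<in> auts K" and pres: "\<forall>e\<in>edges K. c (f ` e) = c e"
      have "card (c ` edges K) \<le> edge_cycles K f" by (rule card_colours_le_edge_cycles[OF assms(1) f pres])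
      then have "M + 1 \<le> edge_cycles K f" using c by simp
      then show "f = id" using assms(3)[OF f] by (meson add_le_same_cancel1 le_trans not_one_le_zero)
    qed
  qed simp
next
  fix k assume k: "1 \<le> k \<and> (\<forall>c. c ` edges K = {1..k} \<longrightarrow> distinguishing K c)"
  show "M + 1 \<le> k"
  proof (rule ccontr)
    assume "\<not> M + 1 \<le> k"
    then obtain f where f: "f \<in> auts K" "f \<noteq> id" "k \<le> edge_cycles K f" using assms(4) by auto
    obtain c where c: "c ` edges K = {1..k}" "\<forall>e\<in>edges K. c (f ` e) = c e"
      using exists_colouring_preserved[OF assms(1) f(1) conjunct1[OF k] f(3)] by blast
    then have "distinguishing K c" using conjunct2[OF k] by simp
    then show False using f(1,2) c(2) unfolding distinguishing_def by simp
  qed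
qed

definition image_subgraph :: "('b \<Rightarrow> 'c) \<Rightarrow> 'b graph \<Rightarrow> 'b set \<Rightarrow> 'c graph" where
  "image_subgraph f K X = (f ` X, image f ` {e \<in> edges K. e \<subseteq> X})"

lemma verts_image_subgraph [simp]: "verts (image_subgraph f K X) = f ` X"
  unfolding image_subgraph_def verts_def by simp

lemma edges_image_subgraph: "edges (image_subgraph f K X) = image f ` {e \<in> edges K. e \<subseteq> X}"
  unfolding image_subgraph_def edges_def by simp

lemma simple_graph_image_subgraph:
  assumes K: "simple_graph K" and X: "X \<subseteq> verts K" and inj: "inj_on f X"
  shows "simple_graph (image_subgraph f K X)"
  unfolding simple_graph_def
proof (intro conjI ballI)
  show "finite (verts (image_subgraph f K X))"
    using simple_graph_finite_verts[OF K] X finite_subset by auto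
  fix e assume "e \<in> edges (image_subgraph f K X)"
  then obtain e' where e': "e' \<in> edges K" "e' \<subseteq> X" "e = f ` e'" by (auto simp: edges_image_subgraph)
  then obtain u v where uv: "e' = {u, v}" "u \<noteq> v" using simple_graph_edge[OF K] by blast
  then have "f u \<noteq> f v" "e = {f u, f v}" "f u \<in> f ` X" "f v \<in> f ` X"
    using e' inj by (auto simp: inj_on_def)
  then show "\<exists>u v. e = {u, v} \<and> u \<noteq> v \<and> u \<in> verts (image_subgraph f K X) \<and> v \<in> verts (image_subgraph f K X)"
    by auto
qed

lemma image_subgraph_edge_iff:
  assumes "inj_on f X" "u \<in> X" "v \<in> X"
  shows "{f u, f v} \<in> edges (image_subgraph f K X) \<longleftrightarrow> {u, v} \<in> edges K"
proof
  assume "{f u, f v} \<in> edges (image_subgraph f K X)"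
  then obtain e where e: "e \<in> edges K" "e \<subseteq> X" "f ` {u, v} = f ` e" by (auto simp: edges_image_subgraph)
  then have "e = {u, v}" using inj_on_image_eq_iff[OF assms(1)] assms(2,3) by (metis empty_subsetI insert_subset)
  then show "{u, v} \<in> edges K" using e(1) by simp
qed (use assms in \<open>auto simp: edges_image_subgraph intro!: image_eqI[of _ _ "{u, v}"]\<close>)

locale nontrivial_connected_graph =
  fixes G :: "'a graph"
  assumes simple: "simple_graph G" and connected: "connected_graph G" and two_verts: "2 \<le> card (verts G)"
begin

abbreviation "V \<equiv> verts G"
abbreviation "E \<equiv> edges G"
abbreviation "H \<equiv> cart_prod G G"

lemma finite_V: "finite V" using simple_graph_finite_verts[OF simple] .
lemma finite_E: "finite E" using simple_graph_finite_edges[OF simple] .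
lemma simple_H: "simple_graph H" using simple_graph_cart_prod[OF simple simple] .
lemma finite_edges_H: "finite (edges H)" using simple_graph_finite_edges[OF simple_H] .

lemma two_distinct_verts:
  obtains b1 b2 where "b1 \<in> V" "b2 \<in> V" "b1 \<noteq> b2"
proof -
  have "\<not> card V \<le> Suc 0" using two_verts by simp
  then show ?thesis using that card_le_Suc0_iff_eq[OF finite_V] by blast
qed

lemma exists_walk: "u \<in> V \<Longrightarrow> v \<in> V \<Longrightarrow> \<exists>k. (adj G ^^ k) u v"
  using connected unfolding connected_graph_def by (simp add: rtranclp_power)

lemma adj_square_iff:
  "adj H (a, b) (c, d) \<longleftrightarrow> (a = c \<and> a \<in> V \<and> adj G b d) \<or> (b = d \<and> b \<in> V \<and> adj G a c)"
  unfolding adj_def by (rule cart_prod_edge_iff)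

lemma square_edge_layer1_iff: "b \<in> V \<Longrightarrow> {(u, b), (v, b)} \<in> edges H \<longleftrightarrow> {u, v} \<in> E"
  using cart_prod_edge_iff[of u b v b G G] simple_graph_edge_verts[OF simple, of b b] by auto

lemma square_edge_layer2_iff: "a \<in> V \<Longrightarrow> {(a, x), (a, y)} \<in> edges H \<longleftrightarrow> {x, y} \<in> E"
  using cart_prod_edge_iff[of a x a y G G] simple_graph_edge_verts[OF simple, of a a] by auto

lemma square_walk_split:
  "(adj H ^^ n) (a, b) (c, d) \<Longrightarrow> \<exists>i j. i + j = n \<and> (adj G ^^ i) a c \<and> (adj G ^^ j) b d"
proof (induction n arbitrary: c d)
  case (Suc n)
  from Suc.prems obtain p where p: "(adj H ^^ n) (a, b) p" "adj H p (c, d)" by (rule relpowp_Suc_E)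
  obtain c' d' where [simp]: "p = (c', d')" by fastforce
  obtain i j where ij: "i + j = n" "(adj G ^^ i) a c'" "(adj G ^^ j) b d'" using Suc.IH[of c' d'] p(1) by auto
  from p(2) consider "c' = c" "adj G d' d" | "d' = d" "adj G c' c" by (auto simp: adj_square_iff)
  then show ?case
  proof cases
    case 1
    then show ?thesis using ij relpowp_Suc_I[OF ij(3)] by (intro exI[of _ i] exI[of _ "Suc j"]) auto
  next
    case 2
    then show ?thesis using ij relpowp_Suc_I[OF ij(2)] by (intro exI[of _ "Suc i"] exI[of _ j]) auto
  qed
qed simp

lemma square_walk_layer1: "b \<in> V \<Longrightarrow> (adj G ^^ i) a c \<Longrightarrow> (adj H ^^ i) (a, b) (c, b)"
proof (induction i arbitrary: c)
  case (Suc i)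
  from Suc.prems(2) obtain y where y: "(adj G ^^ i) a y" "adj G y c" by (rule relpowp_Suc_E)
  then have "adj H (y, b) (c, b)" using Suc.prems(1) by (simp add: adj_square_iff)
  with Suc.IH[OF Suc.prems(1) y(1)] show ?case by (rule relpowp_Suc_I)
qed simp

lemma square_walk_layer2: "a \<in> V \<Longrightarrow> (adj G ^^ j) b d \<Longrightarrow> (adj H ^^ j) (a, b) (a, d)"
proof (induction j arbitrary: d)
  case (Suc j)
  from Suc.prems(2) obtain y where y: "(adj G ^^ j) b y" "adj G y d" by (rule relpowp_Suc_E)
  then have "adj H (a, y) (a, d)" using Suc.prems(1) by (simp add: adj_square_iff)
  with Suc.IH[OF Suc.prems(1) y(1)] show ?case by (rule relpowp_Suc_I)
qed simp

lemma walk_dist_square: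
  assumes "a \<in> V" "b \<in> V" "c \<in> V" "d \<in> V"
  shows "walk_dist H (a, b) (c, d) = walk_dist G a c + walk_dist G b d"
proof (rule antisym)
  obtain i j where "(adj G ^^ i) a c" "(adj G ^^ j) b d" using exists_walk assms by metis
  then have "(adj H ^^ walk_dist G a c) (a, b) (c, b)" "(adj H ^^ walk_dist G b d) (c, b) (c, d)"
    using square_walk_layer1[OF assms(2) walk_dist_walk] square_walk_layer2[OF assms(3) walk_dist_walk]
    by simp_all
  then have walk: "(adj H ^^ (walk_dist G a c + walk_dist G b d)) (a, b) (c, d)"
    by (auto simp: relpowp_add)
  then show "walk_dist H (a, b) (c, d) \<le> walk_dist G a c + walk_dist G b d"
    by (rule walk_dist_le)
  obtain i' j' where "i' + j' = walk_dist H (a, b) (c, d)" "(adj G ^^ i') a c" "(adj G ^^ j') b d"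
    using square_walk_split[OF walk_dist_walk[OF walk]] by blast
  then show "walk_dist G a c + walk_dist G b d \<le> walk_dist H (a, b) (c, d)"
    using walk_dist_le[of i' G a c] walk_dist_le[of j' G b d] by linarith
qed

text \<open>layer1 b and layer2 a are the G-layers G^b and ^aG of the paper.\<close>
definition layer1 :: "'a \<Rightarrow> ('a \<times> 'a) set" where "layer1 b = V \<times> {b}"
definition layer2 :: "'a \<Rightarrow> ('a \<times> 'a) set" where "layer2 a = {a} \<times> V"

lemma layer1_subset: "b \<in> V \<Longrightarrow> layer1 b \<subseteq> V \<times> V"
  unfolding layer1_def by auto

lemma auts_square_inj_on: "\<psi> \<in> auts H \<Longrightarrow> inj_on \<psi> (V \<times> V)"
  using auts_inj_on[of \<psi> H] by simp

lemma auts_square_image: "\<psi> \<in> auts H \<Longrightarrow> \<psi> ` (V \<times> V) = V \<times> V"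
  using auts_image_verts[of \<psi> H] by simp

lemma layer1_geodesic:
  assumes "a \<in> V" "a' \<in> V" "b \<in> V" "c \<in> V" "d \<in> V"
    and "walk_dist H (a, b) (c, d) + walk_dist H (c, d) (a', b) = walk_dist H (a, b) (a', b)"
  shows "d = b"
proof -
  obtain k1 k2 k3 where k: "(adj G ^^ k1) a c" "(adj G ^^ k2) c a'" "(adj G ^^ k3) d b"
    using exists_walk assms(1-5) by metis
  have "walk_dist G a c + walk_dist G b d + (walk_dist G c a' + walk_dist G d b) = walk_dist G a a'"
    using assms by (simp add: walk_dist_square)
  moreover have "walk_dist G a a' \<le> walk_dist G a c + walk_dist G c a'"
    using walk_dist_triangle[OF k(1,2)] .
  ultimately have "walk_dist G d b = 0" by linarith
  then show ?thesis using walk_dist_eq_0[OF k(3)] by simp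
qed

text \<open>Automorphisms preserve distances, so the image of a layer is geodesically convex; in a
  Cartesian product a convex set containing two points contains the whole box they span.\<close>
lemma auts_image_layer1_box:
  assumes \<psi>: "\<psi> \<in> auts H" and b: "b \<in> V"
    and "(x, y) \<in> \<psi> ` layer1 b" "(x', y') \<in> \<psi> ` layer1 b"
  shows "(x, y') \<in> \<psi> ` layer1 b"
proof -
  obtain a a' where a: "a \<in> V" "a' \<in> V" "(x, y) = \<psi> (a, b)" "(x', y') = \<psi> (a', b)"
    using assms(3,4) by (auto simp: layer1_def)
  have "(x, y) \<in> V \<times> V" "(x', y') \<in> V \<times> V"
    using a auts_in_verts[OF \<psi>, of "(a, b)"] auts_in_verts[OF \<psi>, of "(a', b)"] b by simp_all
  then have xy: "x \<in> V" "y \<in> V" "x' \<in> V" "y' \<in> V" by auto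
  then have "(x, y') \<in> \<psi> ` (V \<times> V)" using auts_square_image[OF \<psi>] by simp
  then obtain c d where cd: "c \<in> V" "d \<in> V" "(x, y') = \<psi> (c, d)" by auto
  have dist: "walk_dist H (\<psi> (p, q)) (\<psi> (r, s)) = walk_dist H (p, q) (r, s)"
    if "p \<in> V" "q \<in> V" "r \<in> V" "s \<in> V" for p q r s
    using auts_walk_dist[OF simple_H \<psi>, of "(p, q)" "(r, s)"] that by simp
  have "walk_dist H (x, y) (x, y') + walk_dist H (x, y') (x', y') = walk_dist H (x, y) (x', y')"
    using xy by (simp add: walk_dist_square)
  then have "walk_dist H (a, b) (c, d) + walk_dist H (c, d) (a', b) = walk_dist H (a, b) (a', b)"
    unfolding a(3,4) cd(3) using a(1,2) b cd(1,2) by (simp add: dist)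
  then have "d = b" using layer1_geodesic a(1,2) b cd(1,2) by blast
  then show ?thesis using cd by (auto simp: layer1_def)
qed

lemma auts_image_layer1_eq_Times:
  assumes "\<psi> \<in> auts H" "b \<in> V"
  shows "\<psi> ` layer1 b = fst ` \<psi> ` layer1 b \<times> snd ` \<psi> ` layer1 b"
proof
  show "fst ` \<psi> ` layer1 b \<times> snd ` \<psi> ` layer1 b \<subseteq> \<psi> ` layer1 b"
  proof
    fix p assume "p \<in> fst ` \<psi> ` layer1 b \<times> snd ` \<psi> ` layer1 b"
    then have "fst p \<in> fst ` \<psi> ` layer1 b" "snd p \<in> snd ` \<psi> ` layer1 b" by auto
    then obtain q1 q2 where "q1 \<in> \<psi> ` layer1 b" "fst p = fst q1" "q2 \<in> \<psi> ` layer1 b" "snd p = snd q2"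
      by (meson imageE)
    moreover have "p = (fst q1, snd q2)" using calculation by (simp add: prod_eq_iff)
    ultimately show "p \<in> \<psi> ` layer1 b"
      using auts_image_layer1_box[OF assms, of "fst q1" "snd q1" "fst q2" "snd q2"] by simp
  qed
qed (rule subset_fst_snd)

lemma bij_betw_auts_layer1:
  assumes "\<psi> \<in> auts H" "b \<in> V"
  shows "bij_betw (\<lambda>u. \<psi> (u, b)) V (\<psi> ` layer1 b)"
proof -
  have "bij_betw (\<lambda>u. (u, b)) V (layer1 b)" unfolding layer1_def bij_betw_def inj_on_def by auto
  moreover have "bij_betw \<psi> (layer1 b) (\<psi> ` layer1 b)"
    using inj_on_subset[OF auts_square_inj_on[OF assms(1)] layer1_subset[OF assms(2)]]
    by (simp add: bij_betw_def)
  ultimately show ?thesis using bij_betw_trans by (fastforce simp: comp_def)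
qed

lemma not_cart_prime_if_layer_image_Times:
  assumes \<psi>: "\<psi> \<in> auts H" and b: "b \<in> V"
    and S: "\<psi> ` layer1 b = X \<times> Y" and XV: "X \<subseteq> V" and YV: "Y \<subseteq> V"
    and "2 \<le> card X" "2 \<le> card Y"
  shows "\<not> cart_prime G"
proof -
  obtain f1 :: "'a \<Rightarrow> nat" where f1: "inj_on f1 X"
    using ex_bij_betw_finite_nat[OF finite_subset[OF XV finite_V]] bij_betw_imp_inj_on by blast
  obtain f2 :: "'a \<Rightarrow> nat" where f2: "inj_on f2 Y"
    using ex_bij_betw_finite_nat[OF finite_subset[OF YV finite_V]] bij_betw_imp_inj_on by blast
  define G1 where "G1 = image_subgraph f1 G X"
  define G2 where "G2 = image_subgraph f2 G Y"
  define F where "F u = map_prod f1 f2 (\<psi> (u, b))" for u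
  have \<psi>_layer: "bij_betw (\<lambda>u. \<psi> (u, b)) V (X \<times> Y)"
    using bij_betw_auts_layer1[OF \<psi> b] S by simp
  have "bij_betw (map_prod f1 f2) (X \<times> Y) (f1 ` X \<times> f2 ` Y)"
    using bij_betw_map_prod[of f1 X "f1 ` X" f2 Y "f2 ` Y"] f1 f2 by (simp add: bij_betw_def)
  then have "bij_betw F V (verts (cart_prod G1 G2))"
    unfolding F_def G1_def G2_def using bij_betw_trans[OF \<psi>_layer] by (simp add: comp_def)
  moreover have "{u, v} \<in> E \<longleftrightarrow> {F u, F v} \<in> edges (cart_prod G1 G2)" if uv: "u \<in> V" "v \<in> V" for u v
  proof -
    obtain x1 y1 x2 y2 where p: "\<psi> (u, b) = (x1, y1)" "\<psi> (v, b) = (x2, y2)" by fastforce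
    have "\<psi> (u, b) \<in> X \<times> Y" "\<psi> (v, b) \<in> X \<times> Y" using bij_betwE[OF \<psi>_layer] uv by auto
    then have in_XY: "x1 \<in> X" "y1 \<in> Y" "x2 \<in> X" "y2 \<in> Y" unfolding p by auto
    have "{u, v} \<in> E \<longleftrightarrow> {\<psi> (u, b), \<psi> (v, b)} \<in> edges H"
      using auts_edge_iff[OF \<psi>, of "(u, b)" "(v, b)"] square_edge_layer1_iff[OF b] uv b by simp
    also have "\<dots> \<longleftrightarrow> (x1 = x2 \<and> {y1, y2} \<in> E) \<or> (y1 = y2 \<and> {x1, x2} \<in> E)"
      unfolding p cart_prod_edge_iff using in_XY XV YV by blast
    also have "\<dots> \<longleftrightarrow> (f1 x1 = f1 x2 \<and> {f2 y1, f2 y2} \<in> edges G2) \<or> (f2 y1 = f2 y2 \<and> {f1 x1, f1 x2} \<in> edges G1)"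
      unfolding G1_def G2_def
      using image_subgraph_edge_iff[OF f1] image_subgraph_edge_iff[OF f2] in_XY
        inj_on_eq_iff[OF f1] inj_on_eq_iff[OF f2] by simp
    also have "\<dots> \<longleftrightarrow> {F u, F v} \<in> edges (cart_prod G1 G2)"
      unfolding F_def G1_def G2_def p map_prod_simp cart_prod_edge_iff verts_image_subgraph
      using in_XY by blast
    finally show ?thesis .
  qed
  ultimately have "graph_iso G (cart_prod G1 G2)" unfolding graph_iso_def by blast
  moreover have "simple_graph G1" "simple_graph G2"
    unfolding G1_def G2_def using simple_graph_image_subgraph simple XV YV f1 f2 by blast+
  moreover have "2 \<le> card (verts G1)" "2 \<le> card (verts G2)"
    unfolding G1_def G2_def using assms(6,7) card_image[OF f1] card_image[OF f2] by simp_all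
  ultimately show ?thesis unfolding cart_prime_def by blast
qed

lemma auts_image_layer1:
  assumes prime: "cart_prime G" and \<psi>: "\<psi> \<in> auts H" and b: "b \<in> V"
  shows "(\<exists>y\<in>V. \<psi> ` layer1 b = layer1 y) \<or> (\<exists>x\<in>V. \<psi> ` layer1 b = layer2 x)"
proof -
  define X where "X = fst ` \<psi> ` layer1 b"
  define Y where "Y = snd ` \<psi> ` layer1 b"
  have S: "\<psi> ` layer1 b = X \<times> Y"
    unfolding X_def Y_def by (rule auts_image_layer1_eq_Times[OF \<psi> b])
  have "\<psi> ` layer1 b \<subseteq> V \<times> V" using auts_square_image[OF \<psi>] layer1_subset[OF b] by blast
  then have XV: "X \<subseteq> V" and YV: "Y \<subseteq> V" unfolding X_def Y_def by auto
  have "card (\<psi> ` layer1 b) = card V" using bij_betw_same_card[OF bij_betw_auts_layer1[OF \<psi> b]] by simp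
  then have XY: "card X * card Y = card V" by (simp add: S card_cartesian_product)
  have "\<not> (2 \<le> card X \<and> 2 \<le> card Y)"
    using not_cart_prime_if_layer_image_Times[OF \<psi> b S XV YV] prime by blast
  moreover have "card X \<noteq> 0" "card Y \<noteq> 0" using XY two_verts by (metis mult_is_0 not_numeral_le_zero)+
  ultimately consider "card X = 1" | "card Y = 1" by linarith
  then show ?thesis
  proof cases
    case 1
    then obtain x where "X = {x}" by (rule card_1_singletonE)
    moreover from this have "Y = V" using XY card_subset_eq[OF finite_V YV] by simp
    ultimately show ?thesis using S XV unfolding layer2_def by auto
  next
    case 2
    then obtain y where "Y = {y}" by (rule card_1_singletonE)
    moreover from this have "X = V" using XY card_subset_eq[OF finite_V XV] by simp
    ultimately show ?thesis using S YV unfolding layer1_def by auto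
  qed
qed

lemma auts_image_layer1_disjoint:
  assumes "\<psi> \<in> auts H" "b \<in> V" "b' \<in> V" "b \<noteq> b'"
  shows "\<psi> ` layer1 b \<inter> \<psi> ` layer1 b' = {}"
proof -
  have "inj_on \<psi> (layer1 b \<union> layer1 b')"
    using auts_square_inj_on[OF assms(1)] layer1_subset assms(2,3) by (meson Un_least inj_on_subset)
  moreover have "layer1 b \<inter> layer1 b' = {}" using assms(4) by (auto simp: layer1_def)
  ultimately show ?thesis using inj_on_image_Int[of \<psi> "layer1 b \<union> layer1 b'" "layer1 b" "layer1 b'"] by auto
qed

definition swap_aut :: "'a \<times> 'a \<Rightarrow> 'a \<times> 'a" where
  "swap_aut p = (if p \<in> V \<times> V then prod.swap p else p)"

lemma swap_aut_swap_aut [simp]: "swap_aut (swap_aut p) = p"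
  unfolding swap_aut_def by auto

lemma swap_aut_pair: "a \<in> V \<Longrightarrow> b \<in> V \<Longrightarrow> swap_aut (a, b) = (b, a)"
  unfolding swap_aut_def by simp

lemma swap_aut_in_auts: "swap_aut \<in> auts H"
  unfolding auts_def mem_Collect_eq verts_cart_prod
proof (intro conjI ballI allI impI)
  show "bij_betw swap_aut (V \<times> V) (V \<times> V)"
    by (rule bij_betw_byWitness[where f' = swap_aut]) (auto simp: swap_aut_def)
  fix p q assume "p \<in> V \<times> V" "q \<in> V \<times> V"
  then obtain a b c d where "p = (a, b)" "q = (c, d)" "a \<in> V" "b \<in> V" "c \<in> V" "d \<in> V" by auto
  then show "{p, q} \<in> edges H \<longleftrightarrow> {swap_aut p, swap_aut q} \<in> edges H"
    by (simp add: swap_aut_pair cart_prod_edge_iff) blast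
qed (simp add: swap_aut_def)

lemma swap_aut_image_layer1: "a \<in> V \<Longrightarrow> swap_aut ` layer1 a = layer2 a"
proof -
  assume a: "a \<in> V"
  have "swap_aut ` layer1 a = (\<lambda>u. swap_aut (u, a)) ` V" unfolding layer1_def by auto
  also have "\<dots> = (\<lambda>u. (a, u)) ` V" using a by (intro image_cong) (simp_all add: swap_aut_pair)
  finally show ?thesis unfolding layer2_def by auto
qed

lemma swap_aut_image_layer2: "a \<in> V \<Longrightarrow> swap_aut ` layer2 a = layer1 a"
  using arg_cong[OF swap_aut_image_layer1, of a "image swap_aut"] by (simp add: image_image)

lemma auts_image_layer2:
  assumes "cart_prime G" "\<psi> \<in> auts H" "a \<in> V"
  shows "(\<exists>y\<in>V. \<psi> ` layer2 a = layer1 y) \<or> (\<exists>x\<in>V. \<psi> ` layer2 a = layer2 x)"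
proof -
  have "(\<psi> \<circ> swap_aut) ` layer1 a = \<psi> ` layer2 a"
    by (simp only: image_comp[symmetric] swap_aut_image_layer1[OF assms(3)])
  then show ?thesis using auts_image_layer1[OF assms(1) auts_comp[OF assms(2) swap_aut_in_auts] assms(3)]
    by simp
qed

lemma auts_layer1_images_uniform:
  assumes prime: "cart_prime G" and \<psi>: "\<psi> \<in> auts H"
    and "b0 \<in> V" "y0 \<in> V" "\<psi> ` layer1 b0 = layer1 y0" and b: "b \<in> V"
  shows "\<exists>y\<in>V. \<psi> ` layer1 b = layer1 y"
proof (rule ccontr)
  assume not_layer1: "\<not> ?thesis"
  then obtain x where x: "x \<in> V" "\<psi> ` layer1 b = layer2 x" using auts_image_layer1[OF prime \<psi> b] by blast
  have "(x, y0) \<in> \<psi> ` layer1 b \<inter> \<psi> ` layer1 b0"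
    using x assms(4,5) by (simp add: layer1_def layer2_def)
  moreover have "b \<noteq> b0" using not_layer1 assms(4,5) by blast
  ultimately show False using auts_image_layer1_disjoint[OF \<psi> b assms(3)] by blast
qed

text \<open>layer2 a meets layer1 b1 and layer1 b2, whose images are disjoint layers of the first kind;
  so its image cannot be a layer of the first kind too.\<close>
lemma auts_layer2_images_if_layer1_images:
  assumes prime: "cart_prime G" and \<psi>: "\<psi> \<in> auts H"
    and layer1_images: "\<forall>b\<in>V. \<exists>y\<in>V. \<psi> ` layer1 b = layer1 y" and a: "a \<in> V"
  shows "\<exists>x\<in>V. \<psi> ` layer2 a = layer2 x"
proof (rule ccontr)
  assume "\<not> ?thesis"
  then obtain y where y: "\<psi> ` layer2 a = layer1 y" using auts_image_layer2[OF prime \<psi> a] by blast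
  obtain b1 b2 where b: "b1 \<in> V" "b2 \<in> V" "b1 \<noteq> b2" by (rule two_distinct_verts)
  obtain y1 y2 where y12: "\<psi> ` layer1 b1 = layer1 y1" "\<psi> ` layer1 b2 = layer1 y2"
    using layer1_images b by metis
  have "\<psi> (a, b1) \<in> layer1 y" "\<psi> (a, b2) \<in> layer1 y" using y a b unfolding layer2_def by blast+
  moreover have "\<psi> (a, b1) \<in> layer1 y1" "\<psi> (a, b2) \<in> layer1 y2"
    using y12 a b unfolding layer1_def by blast+
  ultimately have "y1 = y2" by (simp add: layer1_def mem_Times_iff)
  then have "\<psi> (a, b1) \<in> \<psi> ` layer1 b1 \<inter> \<psi> ` layer1 b2"
    using y12 \<open>\<psi> (a, b1) \<in> layer1 y1\<close> by simp
  then show False using auts_image_layer1_disjoint[OF \<psi> b] by blast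
qed

lemma auts_square_layer_cases:
  assumes prime: "cart_prime G" and \<psi>: "\<psi> \<in> auts H"
  shows "(\<forall>b\<in>V. \<exists>y\<in>V. \<psi> ` layer1 b = layer1 y) \<and> (\<forall>a\<in>V. \<exists>x\<in>V. \<psi> ` layer2 a = layer2 x)
    \<or> (\<forall>a\<in>V. \<exists>y\<in>V. \<psi> ` layer2 a = layer1 y)"
proof (cases "\<exists>b0\<in>V. \<exists>y0\<in>V. \<psi> ` layer1 b0 = layer1 y0")
  case True
  then have "\<forall>b\<in>V. \<exists>y\<in>V. \<psi> ` layer1 b = layer1 y"
    using auts_layer1_images_uniform[OF prime \<psi>] by blast
  then show ?thesis using auts_layer2_images_if_layer1_images[OF prime \<psi>] by blast
next
  case False
  text \<open>Then \<psi> maps every layer1 to a layer2, and swapping the factors reduces to the first case.\<close>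
  define \<phi> where "\<phi> = swap_aut \<circ> \<psi>"
  have \<phi>: "\<phi> \<in> auts H" unfolding \<phi>_def using auts_comp[OF swap_aut_in_auts \<psi>] .
  have "\<forall>b\<in>V. \<exists>y\<in>V. \<phi> ` layer1 b = layer1 y"
  proof
    fix b assume "b \<in> V"
    then obtain x where "x \<in> V" "\<psi> ` layer1 b = layer2 x" using False auts_image_layer1[OF prime \<psi>] by blast
    then show "\<exists>y\<in>V. \<phi> ` layer1 b = layer1 y"
      unfolding \<phi>_def image_comp[symmetric] using swap_aut_image_layer2 by metis
  qed
  then have "\<forall>a\<in>V. \<exists>x\<in>V. \<phi> ` layer2 a = layer2 x"
    using auts_layer2_images_if_layer1_images[OF prime \<phi>] by blast
  moreover have "\<psi> ` S = swap_aut ` \<phi> ` S" for S unfolding \<phi>_def by (simp add: image_image)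
  ultimately show ?thesis using swap_aut_image_layer2 by metis
qed

lemma auts_restrict_layer1_in_auts:
  assumes \<psi>: "\<psi> \<in> auts H" and b: "b \<in> V" and y: "y \<in> V" and "\<psi> ` layer1 b = layer1 y"
  shows "(\<lambda>x. if x \<in> V then fst (\<psi> (x, b)) else x) \<in> auts G"
proof (rule auts_extend_idI[OF finite_V])
  define f where "f x = fst (\<psi> (x, b))" for x
  have \<psi>_f: "\<psi> (x, b) = (f x, y) \<and> f x \<in> V" if "x \<in> V" for x
  proof -
    have "\<psi> (x, b) \<in> V \<times> {y}" using assms(4) b that unfolding layer1_def by blast
    then show ?thesis unfolding f_def by auto
  qed
  show "(\<lambda>x. fst (\<psi> (x, b))) ` V \<subseteq> V" using \<psi>_f unfolding f_def by blast
  show "inj_on (\<lambda>x. fst (\<psi> (x, b))) V"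
  proof (rule inj_onI)
    fix u v assume "u \<in> V" "v \<in> V" "fst (\<psi> (u, b)) = fst (\<psi> (v, b))"
    then have "\<psi> (u, b) = \<psi> (v, b)" using \<psi>_f unfolding f_def by metis
    then show "u = v" using inj_onD[OF auts_square_inj_on[OF \<psi>]] \<open>u \<in> V\<close> \<open>v \<in> V\<close> b by blast
  qed
  fix u v assume uv: "u \<in> V" "v \<in> V"
  have "{u, v} \<in> E \<longleftrightarrow> {\<psi> (u, b), \<psi> (v, b)} \<in> edges H"
    using auts_edge_iff[OF \<psi>, of "(u, b)" "(v, b)"] square_edge_layer1_iff[OF b] uv b by simp
  also have "\<dots> \<longleftrightarrow> {f u, f v} \<in> E"
    using \<psi>_f uv square_edge_layer1_iff[OF y] by simp
  finally show "{fst (\<psi> (u, b)), fst (\<psi> (v, b))} \<in> E \<longleftrightarrow> {u, v} \<in> E" unfolding f_def by simp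
qed

lemma auts_square_product:
  assumes \<psi>: "\<psi> \<in> auts H"
    and layer1_images: "\<forall>b\<in>V. \<exists>y\<in>V. \<psi> ` layer1 b = layer1 y"
    and layer2_images: "\<forall>a\<in>V. \<exists>x\<in>V. \<psi> ` layer2 a = layer2 x"
  shows "\<exists>\<alpha> \<beta>. \<alpha> \<in> auts G \<and> \<beta> \<in> auts G \<and> (\<forall>a\<in>V. \<forall>b\<in>V. \<psi> (a, b) = (\<alpha> a, \<beta> b))"
proof -
  obtain c where c: "c \<in> V" by (rule two_distinct_verts)
  define \<alpha> where "\<alpha> x = (if x \<in> V then fst (\<psi> (x, c)) else x)" for x
  define \<beta> where "\<beta> x = (if x \<in> V then snd (\<psi> (c, x)) else x)" for x
  have "\<alpha> \<in> auts G"
    using layer1_images auts_restrict_layer1_in_auts[OF \<psi> c] c unfolding \<alpha>_def by blast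
  moreover have "\<beta> \<in> auts G"
  proof -
    text \<open>Conjugating by the swap turns the layers through c of the second kind into layers of
      the first kind.\<close>
    define \<phi> where "\<phi> = swap_aut \<circ> \<psi> \<circ> swap_aut"
    have \<phi>: "\<phi> \<in> auts H" unfolding \<phi>_def using auts_comp swap_aut_in_auts \<psi> by metis
    obtain x where x: "x \<in> V" "\<psi> ` layer2 c = layer2 x" using layer2_images c by blast
    have "\<phi> ` layer1 c = layer1 x"
      unfolding \<phi>_def image_comp[symmetric] using swap_aut_image_layer1 swap_aut_image_layer2 c x by simp
    moreover have "fst (\<phi> (v, c)) = snd (\<psi> (c, v))" if "v \<in> V" for v
    proof -
      have "\<psi> (c, v) \<in> V \<times> V" using auts_square_image[OF \<psi>] c that by blast
      then show ?thesis using c that unfolding \<phi>_def swap_aut_def by auto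
    qed
    then have "(\<lambda>x. if x \<in> V then fst (\<phi> (x, c)) else x) = \<beta>" unfolding \<beta>_def by auto
    ultimately show ?thesis using auts_restrict_layer1_in_auts[OF \<phi> c x(1)] by simp
  qed
  moreover have "\<psi> (a, b) = (\<alpha> a, \<beta> b)" if ab: "a \<in> V" "b \<in> V" for a b
  proof -
    obtain x where x: "\<psi> ` layer2 a = layer2 x" using layer2_images ab(1) by blast
    have "(a, b) \<in> layer2 a" "(a, c) \<in> layer2 a" using ab c by (simp_all add: layer2_def)
    then have "\<psi> (a, b) \<in> layer2 x" "\<psi> (a, c) \<in> layer2 x" unfolding x[symmetric] by simp_all
    then have "fst (\<psi> (a, b)) = fst (\<psi> (a, c))" by (auto simp: layer2_def)
    moreover obtain y where y: "\<psi> ` layer1 b = layer1 y" using layer1_images ab(2) by blast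
    have "(a, b) \<in> layer1 b" "(c, b) \<in> layer1 b" using ab c by (simp_all add: layer1_def)
    then have "\<psi> (a, b) \<in> layer1 y" "\<psi> (c, b) \<in> layer1 y" unfolding y[symmetric] by simp_all
    then have "snd (\<psi> (a, b)) = snd (\<psi> (c, b))" by (auto simp: layer1_def)
    ultimately show ?thesis using ab unfolding \<alpha>_def \<beta>_def by (simp add: prod_eq_iff)
  qed
  ultimately show ?thesis by blast
qed

lemma auts_square_cases:
  assumes "cart_prime G" "\<psi> \<in> auts H"
  shows "(\<exists>\<alpha> \<beta>. \<alpha> \<in> auts G \<and> \<beta> \<in> auts G \<and> (\<forall>a\<in>V. \<forall>b\<in>V. \<psi> (a, b) = (\<alpha> a, \<beta> b)))
    \<or> (\<forall>a\<in>V. \<exists>y\<in>V. \<psi> ` layer2 a = layer1 y)"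
  using auts_square_layer_cases[OF assms] auts_square_product[OF assms(2)] by blast

definition layer1_edges :: "('a \<times> 'a) set set" where
  "layer1_edges = (\<lambda>(e, b). e \<times> {b}) ` (E \<times> V)"

definition layer2_edges :: "('a \<times> 'a) set set" where
  "layer2_edges = (\<lambda>(a, e). {a} \<times> e) ` (V \<times> E)"

lemma edges_square: "edges H = layer1_edges \<union> layer2_edges"
proof
  show "edges H \<subseteq> layer1_edges \<union> layer2_edges"
  proof
    fix e assume e: "e \<in> edges H"
    then obtain u x v y where uxvy: "e = {(u, x), (v, y)}" by (rule cart_prod_edgeE)
    then consider "u = v" "u \<in> V" "{x, y} \<in> E" | "x = y" "x \<in> V" "{u, v} \<in> E"
      using e cart_prod_edge_iff by metis
    then show "e \<in> layer1_edges \<union> layer2_edges"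
    proof cases
      case 1
      then have "e = (\<lambda>(a, e). {a} \<times> e) (u, {x, y})" using uxvy by auto
      then show ?thesis using 1 unfolding layer2_edges_def by blast
    next
      case 2
      then have "e = (\<lambda>(e, b). e \<times> {b}) ({u, v}, x)" using uxvy by auto
      then show ?thesis using 2 unfolding layer1_edges_def by blast
    qed
  qed
  show "layer1_edges \<union> layer2_edges \<subseteq> edges H"
    unfolding layer1_edges_def layer2_edges_def
  proof safe
    fix e b assume "e \<in> E" "b \<in> V"
    moreover obtain u v where "e = {u, v}" using simple_graph_edge[OF simple \<open>e \<in> E\<close>] by blast
    ultimately show "e \<times> {b} \<in> edges H" using square_edge_layer1_iff by auto
  next
    fix a e assume "a \<in> V" "e \<in> E"
    moreover obtain u v where "e = {u, v}" using simple_graph_edge[OF simple \<open>e \<in> E\<close>] by blast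
    ultimately show "{a} \<times> e \<in> edges H" using square_edge_layer2_iff by auto
  qed
qed

lemma layer_edges_disjoint: "layer1_edges \<inter> layer2_edges = {}"
proof -
  have "e \<times> {b} \<noteq> {a} \<times> e'" if "e \<in> E" for e e' :: "'a set" and a b :: 'a
  proof
    assume eq: "e \<times> {b} = {a} \<times> e'"
    obtain u v where "e = {u, v}" "u \<noteq> v" using simple_graph_edge[OF simple \<open>e \<in> E\<close>] by blast
    then have "(u, b) \<in> {a} \<times> e'" "(v, b) \<in> {a} \<times> e'" using eq[symmetric] by blast+
    then show False using \<open>u \<noteq> v\<close> by simp
  qed
  then show ?thesis unfolding layer1_edges_def layer2_edges_def by auto
qed

lemma edge_nonempty: "e \<in> E \<Longrightarrow> e \<noteq> {}"
  using simple_graph_edge[OF simple] by blast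

lemma inj_on_layer1_edge: "inj_on (\<lambda>(e, b). e \<times> {b}) (E \<times> V)"
  by (rule inj_onI) (auto simp: times_eq_iff dest: edge_nonempty)

lemma inj_on_layer2_edge: "inj_on (\<lambda>(a, e). {a} \<times> e) (V \<times> E)"
  by (rule inj_onI) (auto simp: times_eq_iff dest: edge_nonempty)

lemma card_layer1_edges: "card layer1_edges = card E * card V"
  unfolding layer1_edges_def by (simp add: card_image[OF inj_on_layer1_edge] card_cartesian_product)

lemma finite_layer_edges: "finite layer1_edges" "finite layer2_edges"
  using finite_edges_H edges_square by (metis finite_Un)+

lemma image_layer1_edges:
  "g ` layer1_edges = (\<lambda>(e, b). g (e \<times> {b})) ` (E \<times> V)"
  "g ` layer1_edges = (\<lambda>(b, e). g (e \<times> {b})) ` (V \<times> E)"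
  unfolding layer1_edges_def by (auto simp: image_iff)

lemma image_layer2_edges:
  "g ` layer2_edges = (\<lambda>(a, e). g ({a} \<times> e)) ` (V \<times> E)"
  "g ` layer2_edges = (\<lambda>(e, a). g ({a} \<times> e)) ` (E \<times> V)"
  unfolding layer2_edges_def by (auto simp: image_iff)

lemma layer1_edge_in_edges: "e \<in> E \<Longrightarrow> b \<in> V \<Longrightarrow> e \<times> {b} \<in> edges H"
  using edges_square unfolding layer1_edges_def by blast

lemma layer2_edge_in_edges: "a \<in> V \<Longrightarrow> e \<in> E \<Longrightarrow> {a} \<times> e \<in> edges H"
  using edges_square unfolding layer2_edges_def by blast

lemma image_Times_if_product:
  assumes "\<forall>a\<in>V. \<forall>b\<in>V. \<psi> (a, b) = (\<alpha> a, \<beta> b)" "A \<subseteq> V" "B \<subseteq> V"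
  shows "\<psi> ` (A \<times> B) = \<alpha> ` A \<times> \<beta> ` B"
proof -
  have "\<psi> ` (A \<times> B) = map_prod \<alpha> \<beta> ` (A \<times> B)"
    using assms by (intro image_cong) (auto simp: subset_iff)
  then show ?thesis using map_prod_surj_on by metis
qed

lemma forward_orbit_square_eq:
  "\<psi> \<in> auts H \<Longrightarrow> x \<in> edges H \<Longrightarrow> w \<in> forward_orbit (image \<psi>) x \<Longrightarrow>
    forward_orbit (image \<psi>) w = forward_orbit (image \<psi>) x"
  using forward_orbit_eq[OF auts_bij_betw_edges[OF simple_H] finite_edges_H] by blast

lemma edge_cycles_square_le:
  "edge_cycles H \<psi> \<le> card (forward_orbit (image \<psi>) ` layer1_edges) + card (forward_orbit (image \<psi>) ` layer2_edges)"
  unfolding edge_cycles_eq_card_orbits edges_square image_Un by (rule card_Un_le)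

definition cycle_weight :: "('a \<Rightarrow> 'a) \<Rightarrow> nat" where
  "cycle_weight f = edge_cycles G f * card V + vertex_cycles G f * card E"

lemma edge_cycles_square_product_le:
  assumes \<psi>: "\<psi> \<in> auts H" and \<alpha>: "\<alpha> \<in> auts G" and \<beta>: "\<beta> \<in> auts G"
    and prod: "\<forall>a\<in>V. \<forall>b\<in>V. \<psi> (a, b) = (\<alpha> a, \<beta> b)"
  shows "edge_cycles H \<psi> \<le> cycle_weight \<alpha>" "edge_cycles H \<psi> \<le> cycle_weight \<beta>"
proof -
  let ?orbit = "forward_orbit (image \<psi>)"
  have img: "image \<psi> (A \<times> B) = \<alpha> ` A \<times> \<beta> ` B" if "A \<subseteq> V" "B \<subseteq> V" for A B
    using image_Times_if_product[OF prod that] .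
  note count = card_forward_orbits_pair_le[where h = "image \<psi>", OF _ _ _ _ _ forward_orbit_square_eq[OF \<psi>]]
  note facts = img simple_graph_edge_subset[OF simple] finite_V finite_E
    auts_in_verts[OF \<alpha>] auts_in_verts[OF \<beta>] auts_image_edge[OF simple \<alpha>] auts_image_edge[OF simple \<beta>]
    layer1_edge_in_edges layer2_edge_in_edges
  have "card (?orbit ` layer1_edges) \<le> edge_cycles G \<alpha> * card V"
    unfolding image_layer1_edges(1) edge_cycles_eq_card_orbits
    by (rule count[where j = "\<lambda>e b. e \<times> {b}"]) (auto simp: facts)
  moreover have "card (?orbit ` layer2_edges) \<le> vertex_cycles G \<alpha> * card E"
    unfolding image_layer2_edges(1) vertex_cycles_eq_card_orbits
    by (rule count[where j = "\<lambda>a e. {a} \<times> e"]) (auto simp: facts)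
  ultimately show "edge_cycles H \<psi> \<le> cycle_weight \<alpha>"
    using edge_cycles_square_le[of \<psi>] unfolding cycle_weight_def by linarith
  have "card (?orbit ` layer1_edges) \<le> vertex_cycles G \<beta> * card E"
    unfolding image_layer1_edges(2) vertex_cycles_eq_card_orbits
    by (rule count[where j = "\<lambda>b e. e \<times> {b}"]) (auto simp: facts)
  moreover have "card (?orbit ` layer2_edges) \<le> edge_cycles G \<beta> * card V"
    unfolding image_layer2_edges(2) edge_cycles_eq_card_orbits
    by (rule count[where j = "\<lambda>e a. {a} \<times> e"]) (auto simp: facts)
  ultimately show "edge_cycles H \<psi> \<le> cycle_weight \<beta>"
    using edge_cycles_square_le[of \<psi>] unfolding cycle_weight_def by linarith
qed

definition prod_aut :: "('a \<Rightarrow> 'a) \<Rightarrow> ('a \<Rightarrow> 'a) \<Rightarrow> 'a \<times> 'a \<Rightarrow> 'a \<times> 'a" where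
  "prod_aut \<alpha> \<beta> p = (if p \<in> V \<times> V then map_prod \<alpha> \<beta> p else p)"

lemma prod_aut_pair: "a \<in> V \<Longrightarrow> b \<in> V \<Longrightarrow> prod_aut \<alpha> \<beta> (a, b) = (\<alpha> a, \<beta> b)"
  unfolding prod_aut_def by simp

lemma prod_aut_in_auts:
  assumes \<alpha>: "\<alpha> \<in> auts G" and \<beta>: "\<beta> \<in> auts G"
  shows "prod_aut \<alpha> \<beta> \<in> auts H"
  unfolding auts_def mem_Collect_eq verts_cart_prod
proof (intro conjI ballI allI impI)
  have "bij_betw (map_prod \<alpha> \<beta>) (V \<times> V) (V \<times> V)"
    using bij_betw_map_prod[OF auts_bij_betw[OF \<alpha>] auts_bij_betw[OF \<beta>]] .
  then show "bij_betw (prod_aut \<alpha> \<beta>) (V \<times> V) (V \<times> V)"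
    by (rule bij_betw_cong[THEN iffD1, rotated]) (simp add: prod_aut_def)
  fix p q assume "p \<in> V \<times> V" "q \<in> V \<times> V"
  then obtain a b c d where abcd: "p = (a, b)" "q = (c, d)" "a \<in> V" "b \<in> V" "c \<in> V" "d \<in> V" by auto
  have "\<alpha> a = \<alpha> c \<longleftrightarrow> a = c" "\<beta> b = \<beta> d \<longleftrightarrow> b = d"
    using inj_on_eq_iff[OF auts_inj_on[OF \<alpha>]] inj_on_eq_iff[OF auts_inj_on[OF \<beta>]] abcd by auto
  then show "{p, q} \<in> edges H \<longleftrightarrow> {prod_aut \<alpha> \<beta> p, prod_aut \<alpha> \<beta> q} \<in> edges H"
    using abcd auts_edge_iff[OF \<alpha>] auts_edge_iff[OF \<beta>] auts_in_verts[OF \<alpha>] auts_in_verts[OF \<beta>]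
    by (simp add: prod_aut_pair cart_prod_edge_iff)
qed (simp add: prod_aut_def)

lemma edge_cycles_prod_aut_id:
  assumes \<beta>: "\<beta> \<in> auts G"
  shows "edge_cycles H (prod_aut \<beta> id) = cycle_weight \<beta>"
proof -
  let ?h = "image (prod_aut \<beta> id)"
  have img: "?h (A \<times> B) = \<beta> ` A \<times> B" if "A \<subseteq> V" "B \<subseteq> V" for A B
    using image_Times_if_product[of "prod_aut \<beta> id" \<beta> id, OF _ that] by (simp add: prod_aut_pair)
  note facts = img simple_graph_edge_subset[OF simple] finite_V finite_E
    auts_in_verts[OF \<beta>] auts_image_edge[OF simple \<beta>]
  have "?h (e \<times> {b}) \<in> layer1_edges" if "e \<in> E" "b \<in> V" for e b
    unfolding layer1_edges_def using that by (auto simp: facts intro!: image_eqI[of _ _ "(\<beta> ` e, b)"])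
  moreover have "?h ({a} \<times> e) \<in> layer2_edges" if "a \<in> V" "e \<in> E" for a e
    unfolding layer2_edges_def using that by (auto simp: facts intro!: image_eqI[of _ _ "(\<beta> a, e)"])
  ultimately have closed: "?h ` layer1_edges \<subseteq> layer1_edges" "?h ` layer2_edges \<subseteq> layer2_edges"
    unfolding layer1_edges_def layer2_edges_def by auto
  have "card (forward_orbit ?h ` layer1_edges) = edge_cycles G \<beta> * card V"
    unfolding image_layer1_edges(1) edge_cycles_eq_card_orbits
    using inj_on_layer1_edge by (intro card_forward_orbits_pair_eq[where j = "\<lambda>e b. e \<times> {b}"]) (auto simp: facts)
  moreover have "card (forward_orbit ?h ` layer2_edges) = vertex_cycles G \<beta> * card E"
    unfolding image_layer2_edges(1) vertex_cycles_eq_card_orbits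
    using inj_on_layer2_edge by (intro card_forward_orbits_pair_eq[where j = "\<lambda>a e. {a} \<times> e"]) (auto simp: facts)
  ultimately show ?thesis
    unfolding edge_cycles_eq_card_orbits edges_square cycle_weight_def
    using card_forward_orbits_Un_disjoint[OF closed layer_edges_disjoint finite_layer_edges] by simp
qed

lemma swap_aut_image_layer1_edge: "e \<in> E \<Longrightarrow> b \<in> V \<Longrightarrow> swap_aut ` (e \<times> {b}) = {b} \<times> e"
  using simple_graph_edge_subset[OF simple] by (force simp: swap_aut_def)

lemma swap_aut_image_layer2_edge: "a \<in> V \<Longrightarrow> e \<in> E \<Longrightarrow> swap_aut ` ({a} \<times> e) = e \<times> {a}"
  using simple_graph_edge_subset[OF simple] by (force simp: swap_aut_def)

text \<open>The swap has orbits of size at most two on edges, each containing exactly one layer1 edge.\<close>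
lemma edge_cycles_swap_aut_ge: "card E * card V \<le> edge_cycles H swap_aut"
proof -
  let ?h = "image swap_aut"
  have swap_twice: "?h (?h x) = x \<and> ?h x \<in> layer2_edges" if "x \<in> layer1_edges" for x
    using that swap_aut_image_layer1_edge swap_aut_image_layer2_edge
    unfolding layer1_edges_def layer2_edges_def by auto
  have orbit: "forward_orbit ?h x \<subseteq> {x, ?h x}" if "x \<in> layer1_edges" for x
  proof -
    have "(?h ^^ k) x \<in> {x, ?h x}" for k by (induction k) (use swap_twice[OF that] in auto)
    then show ?thesis unfolding forward_orbit_def by auto
  qed
  have "inj_on (forward_orbit ?h) layer1_edges"
  proof (rule inj_onI)
    fix x y assume x: "x \<in> layer1_edges" and y: "y \<in> layer1_edges"
      and "forward_orbit ?h x = forward_orbit ?h y"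
    then have "y \<in> {x, ?h x}" using orbit[OF x] forward_orbit_self[of y ?h] by blast
    moreover have "?h x \<noteq> y" using swap_twice[OF x] y layer_edges_disjoint by blast
    ultimately show "x = y" by blast
  qed
  then have "card layer1_edges = card (forward_orbit ?h ` layer1_edges)" by (simp add: card_image)
  also have "\<dots> \<le> edge_cycles H swap_aut"
    unfolding edge_cycles_eq_card_orbits edges_square
    using finite_layer_edges by (intro card_mono) auto
  finally show ?thesis by (simp add: card_layer1_edges)
qed

text \<open>If \<psi> maps every layer2 onto a layer1, it maps every layer2 edge to a layer1 edge, so each
  of its edge orbits meets the layer1 edges.\<close>
lemma edge_cycles_le_if_layer2_to_layer1:
  assumes \<psi>: "\<psi> \<in> auts H" and layers: "\<forall>a\<in>V. \<exists>y\<in>V. \<psi> ` layer2 a = layer1 y"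
  shows "edge_cycles H \<psi> \<le> card E * card V"
proof -
  let ?h = "image \<psi>"
  have to_layer1: "?h x \<in> layer1_edges" if x: "x \<in> layer2_edges" for x
  proof -
    obtain a e where ae: "a \<in> V" "e \<in> E" "x = {a} \<times> e" using x unfolding layer2_edges_def by auto
    obtain y where "\<psi> ` layer2 a = layer1 y" using layers ae(1) by blast
    moreover have "x \<subseteq> layer2 a" using ae simple_graph_edge_subset[OF simple] unfolding layer2_def by auto
    ultimately have sub: "?h x \<subseteq> layer1 y" by blast
    have "?h x \<in> edges H" using auts_image_edge[OF simple_H \<psi>] x edges_square by blast
    moreover have "?h x \<notin> layer2_edges"
    proof
      assume "?h x \<in> layer2_edges"
      then obtain a' e' where "?h x = {a'} \<times> e'" "e' \<in> E" unfolding layer2_edges_def by auto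
      moreover obtain u v where "e' = {u, v}" "u \<noteq> v" using simple_graph_edge[OF simple \<open>e' \<in> E\<close>] by blast
      ultimately show False using sub unfolding layer1_def by auto
    qed
    ultimately show ?thesis using edges_square by blast
  qed
  have "forward_orbit ?h ` edges H \<subseteq> forward_orbit ?h ` layer1_edges"
  proof
    fix t assume "t \<in> forward_orbit ?h ` edges H"
    then obtain x where x: "x \<in> edges H" "t = forward_orbit ?h x" by blast
    show "t \<in> forward_orbit ?h ` layer1_edges"
    proof (cases "x \<in> layer1_edges")
      case False
      then have "x \<in> layer2_edges" using x(1) edges_square by blast
      moreover have "forward_orbit ?h (?h x) = t"
        using forward_orbit_square_eq[OF \<psi> x(1) apply_in_forward_orbit] x(2) by simp
      ultimately show ?thesis using to_layer1 by blast
    qed (use x in blast)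
  qed
  then have "edge_cycles H \<psi> \<le> card (forward_orbit ?h ` layer1_edges)"
    unfolding edge_cycles_eq_card_orbits using finite_layer_edges by (intro card_mono) auto
  also have "\<dots> \<le> card layer1_edges" by (rule card_image_le[OF finite_layer_edges(1)])
  finally show ?thesis by (simp add: card_layer1_edges)
qed

lemma card_edges_ge_1: "1 \<le> card E"
proof -
  obtain b1 b2 where b: "b1 \<in> V" "b2 \<in> V" "b1 \<noteq> b2" by (rule two_distinct_verts)
  then obtain k where k: "(adj G ^^ k) b1 b2" using exists_walk by blast
  then obtain k' where "k = Suc k'" using b(3) by (cases k) auto
  then obtain y where "adj G y b2" using k by (metis relpowp_Suc_E)
  then have "E \<noteq> {}" unfolding adj_def by auto
  then show ?thesis using finite_E by (simp add: Suc_leI card_gt_0_iff)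
qed

definition max_weight :: nat where
  "max_weight = (if auts G = {id} then 0 else Max {cycle_weight f | f. f \<in> auts G - {id}})"

lemma finite_cycle_weights: "finite {cycle_weight f | f. f \<in> auts G - {id}}"
proof (rule finite_subset)
  show "{cycle_weight f | f. f \<in> auts G - {id}} \<subseteq> {..card E * card V + card V * card E}"
    unfolding cycle_weight_def using cycles_le_card[OF simple] by (auto intro!: add_mono mult_right_mono)
qed simp

lemma cycle_weight_le_max_weight: "f \<in> auts G \<Longrightarrow> f \<noteq> id \<Longrightarrow> cycle_weight f \<le> max_weight"
  unfolding max_weight_def using Max_ge[OF finite_cycle_weights] by auto

lemma max_weight_attained:
  assumes "auts G \<noteq> {id}"
  shows "\<exists>f\<in>auts G. f \<noteq> id \<and> cycle_weight f = max_weight"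
proof -
  have "{cycle_weight f | f. f \<in> auts G - {id}} \<noteq> {}" using assms id_in_auts by blast
  then have "max_weight \<in> {cycle_weight f | f. f \<in> auts G - {id}}"
    unfolding max_weight_def using assms Max_in[OF finite_cycle_weights] by simp
  then show ?thesis by auto
qed

lemma edge_cycles_square_le_max:
  assumes prime: "cart_prime G" and \<psi>: "\<psi> \<in> auts H" "\<psi> \<noteq> id"
  shows "edge_cycles H \<psi> \<le> max (card V * card E) max_weight"
  using auts_square_cases[OF prime \<psi>(1)]
proof
  assume "\<exists>\<alpha> \<beta>. \<alpha> \<in> auts G \<and> \<beta> \<in> auts G \<and> (\<forall>a\<in>V. \<forall>b\<in>V. \<psi> (a, b) = (\<alpha> a, \<beta> b))"
  then obtain \<alpha> \<beta> where \<alpha>\<beta>: "\<alpha> \<in> auts G" "\<beta> \<in> auts G" "\<forall>a\<in>V. \<forall>b\<in>V. \<psi> (a, b) = (\<alpha> a, \<beta> b)"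
    by blast
  have "\<alpha> \<noteq> id \<or> \<beta> \<noteq> id"
  proof (rule ccontr)
    assume "\<not> ?thesis"
    then have "\<psi> = id" using auts_eq_id[OF \<psi>(1)] \<alpha>\<beta>(3) by auto
    then show False using \<psi>(2) by simp
  qed
  then have "edge_cycles H \<psi> \<le> max_weight"
    using edge_cycles_square_product_le[OF \<psi>(1) \<alpha>\<beta>] cycle_weight_le_max_weight \<alpha>\<beta>(1,2)
    by (meson order_trans)
  then show ?thesis by simp
next
  assume "\<forall>a\<in>V. \<exists>y\<in>V. \<psi> ` layer2 a = layer1 y"
  then show ?thesis using edge_cycles_le_if_layer2_to_layer1[OF \<psi>(1)] by (simp add: mult.commute)
qed

lemma exists_square_aut_edge_cycles_ge:
  "\<exists>\<psi>\<in>auts H. \<psi> \<noteq> id \<and> max (card V * card E) max_weight \<le> edge_cycles H \<psi>"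
proof (cases "max_weight \<le> card V * card E")
  case True
  obtain b1 b2 where b: "b1 \<in> V" "b2 \<in> V" "b1 \<noteq> b2" by (rule two_distinct_verts)
  then have "swap_aut (b1, b2) \<noteq> id (b1, b2)" by (simp add: swap_aut_pair)
  then have "swap_aut \<noteq> id" by metis
  moreover have "max (card V * card E) max_weight \<le> edge_cycles H swap_aut"
    using edge_cycles_swap_aut_ge True by (simp add: mult.commute)
  ultimately show ?thesis using swap_aut_in_auts by blast
next
  case False
  then have "auts G \<noteq> {id}" unfolding max_weight_def by auto
  then obtain \<beta> where \<beta>: "\<beta> \<in> auts G" "\<beta> \<noteq> id" "cycle_weight \<beta> = max_weight"
    using max_weight_attained by blast
  then obtain x where x: "x \<in> V" "\<beta> x \<noteq> x" using auts_eq_id[OF \<beta>(1)] by blast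
  then have "prod_aut \<beta> id (x, x) \<noteq> id (x, x)" by (simp add: prod_aut_pair)
  then have "prod_aut \<beta> id \<noteq> id" by metis
  moreover have "max (card V * card E) max_weight \<le> edge_cycles H (prod_aut \<beta> id)"
    using edge_cycles_prod_aut_id[OF \<beta>(1)] \<beta>(3) False by simp
  ultimately show ?thesis using prod_aut_in_auts[OF \<beta>(1) id_in_auts] by blast
qed

lemma theta'_square:
  assumes "cart_prime G"
  shows "theta' H = max (card V * card E) max_weight + 1"
proof (rule theta'_eq_Suc_max_edge_cycles[OF simple_H])
  show "1 \<le> max (card V * card E) max_weight"
    using two_verts card_edges_ge_1 by (simp add: le_max_iff_disj)
next
  show "\<exists>f\<in>auts H. f \<noteq> id \<and> max (card V * card E) max_weight \<le> edge_cycles H f"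
    by (rule exists_square_aut_edge_cycles_ge)
qed (rule edge_cycles_square_le_max[OF assms])

end

theorem mainTheorem10:
  fixes G :: "'a graph"
  assumes "simple_graph G" and "connected_graph G" and "cart_prime G"
    and "card (verts G) \<ge> 2"
  shows "theta' (cart_prod G G) =
     max (card (verts G) * card (edges G))
         (if auts G = {id} then 0
          else Max {edge_cycles G f * card (verts G) + vertex_cycles G f * card (edges G)
                    | f. f \<in> auts G - {id}}) + 1"
proof -
  interpret nontrivial_connected_graph G using assms(1,2,4) by unfold_locales
  show ?thesis using theta'_square[OF assms(3)] unfolding max_weight_def cycle_weight_def .
qed

end
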